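(* Let $\bar{\mathcal{L}}$ be the Laplacian of an undirected connected graph on $N\ge2$ nodes, let $\eta\ge0$, $\gamma\in\mathbb{R}$, and let $\bar P\in\mathbb{R}^{Nn\times Nn}$, $Q\in\mathbb{R}^{n\times n}$, $R\in\mathbb{R}^{m\times m}$ be symmetric positive definite. Consider the error dynamics when all agents are connected, $$\dot e(t)=\big(\bar F-\eta(\bar{\mathcal{L}}\otimes I_n)\big)e(t)+\mathcal{I}w(t)-\bar Jv(t),\qquad w(t)^TQw(t)\le1,\ v(t)^TRv(t)\le1.$$ If there exists $\alpha_3\ge0$ such that, with $M=\bar E^T\bar P\bar E$, $$\begin{bmatrix}(\gamma-2\alpha_3)M-\bar A_e^TM-M\bar A_e & -M\bar W & M\bar V\\ -\bar W^TM & \alpha_3Q & 0\\ \bar V^TM & 0 & \alpha_3R\end{bmatrix}\succ0,$$ then this error system is quadratically $\gamma$-bounded with Lyapunov matrix $\bar P$, i.e. whenever $w(t)^TQw(t)\le1$, $v(t)^TRv(t)\le1$ and $e(t)^T\bar Pe(t)\ge1$, one has $\frac{d}{dt}(e(t)^T\bar Pe(t))<\gamma\, e(t)^T\bar Pe(t)$.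
   Context: Data: $A\in\mathbb{R}^{n\times n}$; $B=[B_1\ \cdots\ B_N]$, $B_i\in\mathbb{R}^{n\times p_i}$; $K_i\in\mathbb{R}^{p_i\times n}$, $K=[K_1^T\cdots K_N^T]^T$; $A_{bk}=A+BK$; $C=[C_1^T\cdots C_N^T]^T$, $C_i\in\mathbb{R}^{m_i\times n}$, $m=\sum_im_i$; $L_i\in\mathbb{R}^{n\times m_i}$, $L=[L_1\ \cdots\ L_N]$. Define $\mathcal{I}=[I_n\ \cdots\ I_n]^T\in\mathbb{R}^{Nn\times n}$; $\bar J=N\,\mathrm{BlkDiag}(L_1,\dots,L_N)$; $\bar F$ the $N\times N$ block matrix with $(i,i)$ block $A_{bk}-NL_iC_i-B_iK_i$ and $(i,j)$ block $-B_jK_j$ for $i\ne j$; $H=[\tfrac1NA_{bk}-B_1K_1-L_1C_1\ \cdots\ \tfrac1NA_{bk}-B_NK_N-L_NC_N]\in\mathbb{R}^{n\times Nn}$. Let $S\in\mathbb{R}^{N\times(N-1)}$ satisfy $1_N^TS=0$, $S^TS=I_{N-1}$, $S^T\bar{\mathcal{L}}S=\Lambda^+$, where $\Lambda^+$ is the diagonal matrix of the positive eigenvalues of $\bar{\mathcal{L}}$ ($1_N$ is the all-ones vector). Set $\bar E=[\mathcal{I}\ \ S\otimes I_n]$, $$\bar A_e=\begin{bmatrix}A-LC & H(S\otimes I_n)\\ (S^T\otimes I_n)\bar F\mathcal{I} & (S^T\otimes I_n)\bar F(S\otimes I_n)-\eta(\Lambda^+\otimes I_n)\end{bmatrix},\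 \bar W=\begin{bmatrix}I_n\\(S^T\otimes I_n)\mathcal{I}\end{bmatrix},\ \bar V=\begin{bmatrix}L\\(S^T\otimes I_n)\bar J\end{bmatrix}.$$ *)

theory Defs
  imports Complex_Main "Jordan_Normal_Form.Matrix" "Jordan_Normal_Form.Char_Poly"
begin

definition kron :: "real mat \<Rightarrow> real mat \<Rightarrow> real mat" where
  "kron A B = mat (dim_row A * dim_row B) (dim_col A * dim_col B)
     (\<lambda>(i,j). A $$ (i div dim_row B, j div dim_col B) * B $$ (i mod dim_row B, j mod dim_col B))"

definition append_cols :: "real mat \<Rightarrow> real mat \<Rightarrow> real mat" where
  "append_cols A B = transpose_mat (transpose_mat A @\<^sub>r transpose_mat B)"

definition hcat :: "nat \<Rightarrow> real mat list \<Rightarrow> real mat" where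
  "hcat n Ms = foldr append_cols Ms (0\<^sub>m n 0)"

definition vcat :: "nat \<Rightarrow> real mat list \<Rightarrow> real mat" where
  "vcat n Ms = foldr append_rows Ms (0\<^sub>m 0 n)"

definition msum :: "nat \<Rightarrow> real mat list \<Rightarrow> real mat" where
  "msum n Ms = foldr (+) Ms (0\<^sub>m n n)"

definition pos_def :: "nat \<Rightarrow> real mat \<Rightarrow> bool" where
  "pos_def k M \<longleftrightarrow> M \<in> carrier_mat k k \<and> transpose_mat M = M \<and>
     (\<forall>x \<in> carrier_vec k. x \<noteq> 0\<^sub>v k \<longrightarrow> x \<bullet> (M *\<^sub>v x) > 0)"

definition undirected_graph :: "nat \<Rightarrow> (nat \<Rightarrow> nat \<Rightarrow> bool) \<Rightarrow> bool" where
  "undirected_graph N E \<longleftrightarrow> (\<forall>i<N. \<forall>j<N. E i j \<longleftrightarrow> E j i) \<and> (\<forall>i<N. \<not> E i i)"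

definition connected_graph :: "nat \<Rightarrow> (nat \<Rightarrow> nat \<Rightarrow> bool) \<Rightarrow> bool" where
  "connected_graph N E \<longleftrightarrow> (\<forall>i<N. \<forall>j<N. (\<lambda>a b. a < N \<and> b < N \<and> E a b)\<^sup>*\<^sup>* i j)"

definition laplacian :: "nat \<Rightarrow> (nat \<Rightarrow> nat \<Rightarrow> bool) \<Rightarrow> real mat" where
  "laplacian N E = mat N N (\<lambda>(i,j). if i = j then real (card {k. k < N \<and> E i k})
                                     else if E i j then -1 else 0)"

text \<open>Bs, Ks, Cs, Ls are the lists [B_1..B_N], [K_1..K_N], [C_1..C_N], [L_1..L_N].\<close>

definition Abk :: "nat \<Rightarrow> real mat \<Rightarrow> real mat list \<Rightarrow> real mat list \<Rightarrow> real mat" where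
  "Abk n A Bs Ks = A + msum n (map (\<lambda>i. Bs ! i * Ks ! i) [0..<length Bs])"

definition Istack :: "nat \<Rightarrow> nat \<Rightarrow> real mat" where
  "Istack N n = kron (mat N 1 (\<lambda>_. 1)) (1\<^sub>m n)"

definition Jbar :: "nat \<Rightarrow> real mat list \<Rightarrow> real mat" where
  "Jbar N Ls = real N \<cdot>\<^sub>m diag_block_mat Ls"

definition Fbar :: "nat \<Rightarrow> nat \<Rightarrow> real mat \<Rightarrow> real mat list \<Rightarrow> real mat list \<Rightarrow> real mat list
    \<Rightarrow> real mat list \<Rightarrow> real mat" where
  "Fbar N n A Bs Ks Cs Ls = mat (N * n) (N * n) (\<lambda>(r,c).
     let i = r div n; j = c div n in
     (if i = j then Abk n A Bs Ks - real N \<cdot>\<^sub>m (Ls ! i * Cs ! i) - Bs ! i * Ks ! i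
      else - (Bs ! j * Ks ! j)) $$ (r mod n, c mod n))"

definition Hmat :: "nat \<Rightarrow> nat \<Rightarrow> real mat \<Rightarrow> real mat list \<Rightarrow> real mat list \<Rightarrow> real mat list
    \<Rightarrow> real mat list \<Rightarrow> real mat" where
  "Hmat N n A Bs Ks Cs Ls = mat n (N * n) (\<lambda>(a,c).
     let j = c div n in
     ((1 / real N) \<cdot>\<^sub>m Abk n A Bs Ks - Bs ! j * Ks ! j - Ls ! j * Cs ! j) $$ (a, c mod n))"

definition Ebar :: "nat \<Rightarrow> nat \<Rightarrow> real mat \<Rightarrow> real mat" where
  "Ebar N n S = append_cols (Istack N n) (kron S (1\<^sub>m n))"

definition Aebar :: "nat \<Rightarrow> nat \<Rightarrow> real mat \<Rightarrow> real mat list \<Rightarrow> real mat list \<Rightarrow> real mat list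
    \<Rightarrow> real mat list \<Rightarrow> real \<Rightarrow> real mat \<Rightarrow> real mat \<Rightarrow> real mat" where
  "Aebar N n A Bs Ks Cs Ls \<eta> S \<Lambda> =
     (let F = Fbar N n A Bs Ks Cs Ls; SI = kron S (1\<^sub>m n); StI = kron (transpose_mat S) (1\<^sub>m n) in
      four_block_mat (A - hcat n Ls * vcat n Cs) (Hmat N n A Bs Ks Cs Ls * SI)
                     (StI * F * Istack N n) (StI * F * SI - \<eta> \<cdot>\<^sub>m kron \<Lambda> (1\<^sub>m n)))"

definition Wbar :: "nat \<Rightarrow> nat \<Rightarrow> real mat \<Rightarrow> real mat" where
  "Wbar N n S = 1\<^sub>m n @\<^sub>r (kron (transpose_mat S) (1\<^sub>m n) * Istack N n)"

definition Vbar :: "nat \<Rightarrow> nat \<Rightarrow> real mat \<Rightarrow> real mat list \<Rightarrow> real mat" where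
  "Vbar N n S Ls = hcat n Ls @\<^sub>r (kron (transpose_mat S) (1\<^sub>m n) * Jbar N Ls)"

definition LMI_mat :: "nat \<Rightarrow> nat \<Rightarrow> real \<Rightarrow> real \<Rightarrow> real mat \<Rightarrow> real mat \<Rightarrow> real mat
    \<Rightarrow> real mat \<Rightarrow> real mat \<Rightarrow> real mat \<Rightarrow> real mat" where
  "LMI_mat n m \<gamma> \<alpha> M Ae W V Q R =
     four_block_mat
       (four_block_mat ((\<gamma> - 2 * \<alpha>) \<cdot>\<^sub>m M - transpose_mat Ae * M - M * Ae) (- (M * W))
                       (- (transpose_mat W * M)) (\<alpha> \<cdot>\<^sub>m Q))
       (M * V @\<^sub>r 0\<^sub>m n m)
       (append_cols (transpose_mat V * M) (0\<^sub>m m n))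
       (\<alpha> \<cdot>\<^sub>m R)"

end

theory Submission
  imports Defs
begin

text \<open>
  Let \<open>X = Fbar - \<eta> (Lap \<otimes> I\<^sub>n)\<close> be the error dynamics. Because
  \<open>1 1\<^sup>T / N + S S\<^sup>T = I\<close>, the matrix \<open>Ebar = [Istack, S \<otimes> I\<^sub>n]\<close> is invertible with inverse
  \<open>[Istack\<^sup>T / N; S\<^sup>T \<otimes> I\<^sub>n]\<close>, which splits an error into the agents' average and their
  disagreement. From \<open>Istack\<^sup>T (Lap \<otimes> I\<^sub>n) = 0\<close>, \<open>(Lap \<otimes> I\<^sub>n) Istack = 0\<close>,
  \<open>S\<^sup>T Lap S = \<Lambda>\<close> and \<open>Istack\<^sup>T Fbar = N H\<close> one gets \<open>Aebar = Ebar\<^sup>-\<^sup>1 X Ebar\<close>,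
  \<open>Wbar = Ebar\<^sup>-\<^sup>1 Istack\<close> and \<open>Vbar = Ebar\<^sup>-\<^sup>1 Jbar\<close>, i.e. the LMI is the error system in these
  coordinates. Its quadratic form at \<open>(Ebar\<^sup>-\<^sup>1 e, w, v)\<close> is therefore
  \<open>(\<gamma> - 2\<alpha>) e\<^sup>TPe - d/dt (e\<^sup>TPe) + \<alpha> (w\<^sup>TQw + v\<^sup>TRv) > 0\<close>, and the S-procedure bounds
  \<open>w\<^sup>TQw \<le> 1 \<le> e\<^sup>TPe\<close>, \<open>v\<^sup>TRv \<le> 1 \<le> e\<^sup>TPe\<close> turn this into \<open>d/dt (e\<^sup>TPe) < \<gamma> e\<^sup>TPe\<close>.
  Connectedness, \<open>\<eta> \<ge> 0\<close> and the spectral description of \<open>\<Lambda>\<close> are not needed: they only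
  guarantee that a matrix \<open>S\<close> with the assumed properties exists.
\<close>

abbreviation ones_col :: "nat \<Rightarrow> real mat" where "ones_col N \<equiv> mat N 1 (\<lambda>_. 1)"
abbreviation ones_row :: "nat \<Rightarrow> real mat" where "ones_row N \<equiv> mat 1 N (\<lambda>_. 1)"

lemma sum_lessThan_mult_split:
  fixes g :: "nat \<Rightarrow> 'a :: comm_monoid_add"
  shows "(\<Sum>l<k * n. g l) = (\<Sum>a<k. \<Sum>b<n. g (a * n + b))"
proof -
  have "(\<Sum>b<n. g (a * n + b)) = sum g {a * n..<a * n + n}" for a
    using sum.shift_bounds_nat_ivl[of g 0 "a * n" n] by (simp add: lessThan_atLeast0 add.commute)
  then show ?thesis by (simp add: sum.nat_group)
qed

lemma mult_add_less_mult: "a < k \<Longrightarrow> b < n \<Longrightarrow> a * n + b < k * (n :: nat)"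
  by (metis add_lessD1 add_less_cancel_left less_imp_le_nat mult_Suc mult_le_mono1 order_less_le_trans
      Suc_leI add.commute)

lemma index_decompose: "c < k * n \<Longrightarrow> c = (c div n) * n + c mod (n :: nat) \<and> c div n < k \<and> c mod n < n"
  by (metis div_mult_mod_eq less_mult_imp_div_less mod_less_divisor mult_0_right nat_neq_iff not_less0
      mult.commute)

lemma index_mult_mat_sum:
  "i < dim_row A \<Longrightarrow> j < dim_col B \<Longrightarrow> dim_col A = k \<Longrightarrow> dim_row B = k \<Longrightarrow>
   (A * B) $$ (i, j) = (\<Sum>l<k. A $$ (i, l) * B $$ (l, j))"
  by (simp add: scalar_prod_def lessThan_atLeast0)

lemma append_cols_eq_four_block_mat:
  "dim_row B = dim_row A \<Longrightarrow>
   append_cols A B = four_block_mat A B (0\<^sub>m 0 (dim_col A)) (0\<^sub>m 0 (dim_col B))"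
  by (rule eq_matI) (auto simp: append_cols_def append_rows_def)

lemma carrier_append_cols[simp, intro]:
  "A \<in> carrier_mat r c1 \<Longrightarrow> B \<in> carrier_mat r c2 \<Longrightarrow> append_cols A B \<in> carrier_mat r (c1 + c2)"
  by (subst append_cols_eq_four_block_mat) auto

lemma four_block_mat_empty_blocks:
  "A \<in> carrier_mat r c \<Longrightarrow> B \<in> carrier_mat r 0 \<Longrightarrow> C \<in> carrier_mat 0 c \<Longrightarrow> D \<in> carrier_mat 0 0 \<Longrightarrow>
   four_block_mat A B C D = A"
  by (rule eq_matI) auto

lemma append_cols_mult_append_rows:
  assumes "A \<in> carrier_mat r k1" "B \<in> carrier_mat r k2" "C \<in> carrier_mat k1 c" "D \<in> carrier_mat k2 c"
  shows "append_cols A B * (C @\<^sub>r D) = A * C + B * D"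
proof -
  have "append_cols A B * (C @\<^sub>r D)
    = four_block_mat A B (0\<^sub>m 0 k1) (0\<^sub>m 0 k2) * four_block_mat C (0\<^sub>m k1 0) D (0\<^sub>m k2 0)"
    using assms by (simp add: append_cols_eq_four_block_mat append_rows_def)
  also have "\<dots> = four_block_mat (A * C + B * D) (A * 0\<^sub>m k1 0 + B * 0\<^sub>m k2 0)
    (0\<^sub>m 0 k1 * C + 0\<^sub>m 0 k2 * D) (0\<^sub>m 0 k1 * 0\<^sub>m k1 0 + 0\<^sub>m 0 k2 * 0\<^sub>m k2 0)"
    by (rule mult_four_block_mat) (use assms in auto)
  also have "\<dots> = A * C + B * D"
    using assms by (intro four_block_mat_empty_blocks[of _ r c]) auto
  finally show ?thesis .
qed

lemma append_rows_mult:
  assumes "C \<in> carrier_mat k1 r" "D \<in> carrier_mat k2 r" "Y \<in> carrier_mat r c"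
  shows "(C @\<^sub>r D) * Y = (C * Y) @\<^sub>r (D * Y)"
proof -
  have "Y = four_block_mat Y (0\<^sub>m r 0) (0\<^sub>m 0 c) (0\<^sub>m 0 0)"
    using assms by (intro four_block_mat_empty_blocks[symmetric]) auto
  then have "(C @\<^sub>r D) * Y = four_block_mat C (0\<^sub>m k1 0) D (0\<^sub>m k2 0) * four_block_mat Y (0\<^sub>m r 0) (0\<^sub>m 0 c) (0\<^sub>m 0 0)"
    using assms by (auto simp: append_rows_def)
  also have "\<dots> = four_block_mat (C * Y + 0\<^sub>m k1 0 * 0\<^sub>m 0 c) (C * 0\<^sub>m r 0 + 0\<^sub>m k1 0 * 0\<^sub>m 0 0)
    (D * Y + 0\<^sub>m k2 0 * 0\<^sub>m 0 c) (D * 0\<^sub>m r 0 + 0\<^sub>m k2 0 * 0\<^sub>m 0 0)"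
    by (rule mult_four_block_mat) (use assms in auto)
  finally show ?thesis
    using assms unfolding append_rows_def by (auto intro!: cong_four_block_mat)
qed

lemma mult_append_cols:
  assumes "A \<in> carrier_mat r k1" "B \<in> carrier_mat r k2" "Y \<in> carrier_mat c r"
  shows "Y * append_cols A B = append_cols (Y * A) (Y * B)"
proof -
  have "Y = four_block_mat Y (0\<^sub>m c 0) (0\<^sub>m 0 r) (0\<^sub>m 0 0)"
    using assms by (intro four_block_mat_empty_blocks[symmetric]) auto
  then have "Y * append_cols A B
    = four_block_mat Y (0\<^sub>m c 0) (0\<^sub>m 0 r) (0\<^sub>m 0 0) * four_block_mat A B (0\<^sub>m 0 k1) (0\<^sub>m 0 k2)"
    using assms by (simp add: append_cols_eq_four_block_mat)
  also have "\<dots> = four_block_mat (Y * A + 0\<^sub>m c 0 * 0\<^sub>m 0 k1) (Y * B + 0\<^sub>m c 0 * 0\<^sub>m 0 k2)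
    (0\<^sub>m 0 r * A + 0\<^sub>m 0 0 * 0\<^sub>m 0 k1) (0\<^sub>m 0 r * B + 0\<^sub>m 0 0 * 0\<^sub>m 0 k2)"
    by (rule mult_four_block_mat) (use assms in auto)
  finally show ?thesis
    using assms by (subst append_cols_eq_four_block_mat) (auto intro!: cong_four_block_mat)
qed

lemma append_rows_mult_append_cols:
  assumes "C \<in> carrier_mat k1 r" "D \<in> carrier_mat k2 r" "A \<in> carrier_mat r c1" "B \<in> carrier_mat r c2"
  shows "(C @\<^sub>r D) * append_cols A B = four_block_mat (C * A) (C * B) (D * A) (D * B)"
proof -
  have "(C @\<^sub>r D) * append_cols A B = append_cols ((C * A) @\<^sub>r (D * A)) ((C * B) @\<^sub>r (D * B))"
    using assms by (simp add: mult_append_cols[of _ r c1 _ c2 _ "k1 + k2"] append_rows_mult)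
  also have "\<dots> = four_block_mat (C * A) (C * B) (D * A) (D * B)"
    using assms by (subst append_cols_eq_four_block_mat) (auto simp: append_rows_def intro!: eq_matI)
  finally show ?thesis .
qed

lemma append_cols_mult_vec:
  assumes A: "A \<in> carrier_mat r k1" and B: "B \<in> carrier_mat r k2"
    and a: "a \<in> carrier_vec k1" and b: "b \<in> carrier_vec k2"
  shows "append_cols A B *\<^sub>v (a @\<^sub>v b) = A *\<^sub>v a + B *\<^sub>v b"
proof -
  have "append_cols A B *\<^sub>v (a @\<^sub>v b) = (A *\<^sub>v a + B *\<^sub>v b) @\<^sub>v (0\<^sub>m 0 k1 *\<^sub>v a + 0\<^sub>m 0 k2 *\<^sub>v b)"
    using A B four_block_mat_mult_vec[OF A B zero_carrier_mat zero_carrier_mat a b]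
    by (simp add: append_cols_eq_four_block_mat)
  also have "\<dots> = A *\<^sub>v a + B *\<^sub>v b" by (rule eq_vecI) (use A B in auto)
  finally show ?thesis .
qed

section \<open>Kronecker products with an identity matrix\<close>

lemma dim_kron_id[simp]:
  "dim_row (kron A (1\<^sub>m n)) = dim_row A * n" "dim_col (kron A (1\<^sub>m n)) = dim_col A * n"
  unfolding kron_def by (simp_all only: dim_row_mat dim_col_mat index_one_mat)

lemma carrier_kron_id[simp, intro]: "A \<in> carrier_mat r c \<Longrightarrow> kron A (1\<^sub>m n) \<in> carrier_mat (r * n) (c * n)"
  unfolding carrier_mat_def by simp

lemma index_kron_id:
  assumes "i < dim_row A * n" "j < dim_col A * n"
  shows "kron A (1\<^sub>m n) $$ (i, j) = A $$ (i div n, j div n) * (if i mod n = j mod n then 1 else 0)"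
proof -
  have "n > 0" using assms by (cases n) auto
  then show ?thesis
    unfolding kron_def using assms by (simp only: index_mat dim_row_mat dim_col_mat index_one_mat split mod_less_divisor)
qed

lemma mult_kron_id:
  assumes A: "A \<in> carrier_mat r k" and B: "B \<in> carrier_mat k c"
  shows "kron A (1\<^sub>m n) * kron B (1\<^sub>m n) = kron (A * B) (1\<^sub>m n)"
proof (rule eq_matI)
  fix i j assume "i < dim_row (kron (A * B) (1\<^sub>m n))" "j < dim_col (kron (A * B) (1\<^sub>m n))"
  then have i: "i < r * n" and j: "j < c * n" using A B by auto
  then have n: "n > 0" by (cases n) auto
  have ij: "i div n < r" "j div n < c" using i j by (auto simp: less_mult_imp_div_less)
  let ?\<delta> = "\<lambda>a b. if a = b then 1 else 0 :: real"
  have "(kron A (1\<^sub>m n) * kron B (1\<^sub>m n)) $$ (i, j)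
      = (\<Sum>l<k * n. kron A (1\<^sub>m n) $$ (i, l) * kron B (1\<^sub>m n) $$ (l, j))"
    using A B i j by (intro index_mult_mat_sum) auto
  also have "\<dots> = (\<Sum>a<k. \<Sum>b<n. kron A (1\<^sub>m n) $$ (i, a * n + b) * kron B (1\<^sub>m n) $$ (a * n + b, j))"
    by (rule sum_lessThan_mult_split)
  also have "\<dots> = (\<Sum>a<k. \<Sum>b<n. A $$ (i div n, a) * B $$ (a, j div n) * (?\<delta> (i mod n) b * ?\<delta> b (j mod n)))"
    using A B i j by (intro sum.cong refl) (simp add: index_kron_id mult_add_less_mult)
  also have "\<dots> = (\<Sum>a<k. A $$ (i div n, a) * B $$ (a, j div n) * ?\<delta> (i mod n) (j mod n))"
    using n by (simp add: sum_distrib_left[symmetric] if_distrib[of "\<lambda>x. x * _"] sum.delta cong: if_cong)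
  also have "\<dots> = (A * B) $$ (i div n, j div n) * ?\<delta> (i mod n) (j mod n)"
    using A B ij by (subst index_mult_mat_sum[of _ A _ B k]) (auto simp: sum_distrib_right)
  also have "\<dots> = kron (A * B) (1\<^sub>m n) $$ (i, j)"
    using A B i j by (simp add: index_kron_id)
  finally show "(kron A (1\<^sub>m n) * kron B (1\<^sub>m n)) $$ (i, j) = kron (A * B) (1\<^sub>m n) $$ (i, j)" .
qed (use A B in auto)

lemma add_kron_id:
  assumes "A \<in> carrier_mat r c" "B \<in> carrier_mat r c"
  shows "kron A (1\<^sub>m n) + kron B (1\<^sub>m n) = kron (A + B) (1\<^sub>m n)"
  using assms by (intro eq_matI) (auto simp: index_kron_id less_mult_imp_div_less algebra_simps)

lemma smult_kron_id: "a \<cdot>\<^sub>m kron A (1\<^sub>m n) = kron (a \<cdot>\<^sub>m A) (1\<^sub>m n)"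
  by (intro eq_matI) (auto simp: index_kron_id less_mult_imp_div_less)

lemma transpose_kron_id: "transpose_mat (kron A (1\<^sub>m n)) = kron (transpose_mat A) (1\<^sub>m n)"
  by (intro eq_matI) (auto simp: index_kron_id less_mult_imp_div_less)

lemma kron_id_id: "kron (1\<^sub>m k) (1\<^sub>m n) = 1\<^sub>m (k * n)"
proof (intro eq_matI)
  fix i j assume "i < dim_row (1\<^sub>m (k * n))" "j < dim_col (1\<^sub>m (k * n))"
  then show "kron (1\<^sub>m k) (1\<^sub>m n) $$ (i, j) = 1\<^sub>m (k * n) $$ (i, j)"
    by (auto simp: index_kron_id less_mult_imp_div_less) (metis div_mult_mod_eq)
qed auto

lemma kron_zero_id: "kron (0\<^sub>m r c) (1\<^sub>m n) = 0\<^sub>m (r * n) (c * n)"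
  by (intro eq_matI) (auto simp: index_kron_id less_mult_imp_div_less)

section \<open>Graph Laplacian and the orthogonal complement of the consensus direction\<close>

lemma carrier_laplacian[simp]:
  "laplacian N E \<in> carrier_mat N N" "dim_row (laplacian N E) = N" "dim_col (laplacian N E) = N"
  unfolding laplacian_def by simp_all

lemma sum_indicator_eq_card: "(\<Sum>j<(N :: nat). if P j then 1 else 0 :: real) = real (card {j. j < N \<and> P j})"
proof -
  have "(\<Sum>j<N. if P j then 1 else 0 :: real) = (\<Sum>j\<in>{j\<in>{..<N}. P j}. 1)"
    using sum.inter_filter[of "{..<N}" "\<lambda>_. 1 :: real" P] by simp
  also have "{j\<in>{..<N}. P j} = {j. j < N \<and> P j}" by auto
  finally show ?thesis by simp
qed

lemma laplacian_row_sum: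
  assumes "undirected_graph N E" "i < N"
  shows "(\<Sum>j<N. laplacian N E $$ (i, j)) = 0"
proof -
  have "(\<Sum>j<N. laplacian N E $$ (i, j))
      = (\<Sum>j<N. (if j = i then real (card {k. k < N \<and> E i k}) else 0) - (if E i j then 1 else 0))"
    using assms by (intro sum.cong refl) (auto simp: laplacian_def undirected_graph_def)
  then show ?thesis using assms by (simp add: sum_subtractf sum_indicator_eq_card)
qed

lemma laplacian_mult_ones_col:
  assumes "undirected_graph N E"
  shows "laplacian N E * ones_col N = 0\<^sub>m N 1"
proof (rule eq_matI)
  fix i j assume "i < dim_row (0\<^sub>m N 1)" "j < dim_col (0\<^sub>m N 1)"
  then show "(laplacian N E * ones_col N) $$ (i, j) = 0\<^sub>m N 1 $$ (i, j)"
    using laplacian_row_sum[OF assms] by (subst index_mult_mat_sum[of _ _ _ _ N]) auto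
qed auto

lemma ones_row_mult_laplacian:
  assumes "undirected_graph N E"
  shows "ones_row N * laplacian N E = 0\<^sub>m 1 N"
proof -
  have "transpose_mat (laplacian N E) = laplacian N E"
    using assms by (intro eq_matI) (auto simp: laplacian_def undirected_graph_def)
  moreover have "transpose_mat (ones_col N) = ones_row N" by (intro eq_matI) auto
  ultimately have "ones_row N * laplacian N E = transpose_mat (laplacian N E * ones_col N)"
    by (metis carrier_laplacian mat_carrier transpose_mult)
  then show ?thesis using laplacian_mult_ones_col[OF assms] by simp
qed

lemma ones_row_mult_ones_col: "ones_row N * ones_col N = real N \<cdot>\<^sub>m 1\<^sub>m 1"
proof (rule eq_matI)
  fix i j assume "i < dim_row (real N \<cdot>\<^sub>m 1\<^sub>m 1)" "j < dim_col (real N \<cdot>\<^sub>m (1\<^sub>m 1 :: real mat))"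
  then show "(ones_row N * ones_col N) $$ (i, j) = (real N \<cdot>\<^sub>m 1\<^sub>m 1) $$ (i, j)"
    by (subst index_mult_mat_sum[of _ _ _ _ N]) auto
qed auto

lemma averaging_row_mult_ones_col:
  assumes "N \<ge> 1"
  shows "(1 / real N) \<cdot>\<^sub>m ones_row N * ones_col N = 1\<^sub>m 1"
proof -
  have "(1 / real N) \<cdot>\<^sub>m ones_row N * ones_col N = (1 / real N) \<cdot>\<^sub>m (ones_row N * ones_col N)"
    by (rule mult_smult_assoc_mat) auto
  also have "\<dots> = (1 / real N) \<cdot>\<^sub>m (real N \<cdot>\<^sub>m 1\<^sub>m 1)"
    by (simp only: ones_row_mult_ones_col)
  also have "\<dots> = 1\<^sub>m 1"
    using assms by (auto intro!: eq_matI)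
  finally show ?thesis .
qed

lemma ones_projection_add_S_S_transpose:
  fixes S :: "real mat"
  assumes N: "N \<ge> 1" and S_dim: "S \<in> carrier_mat N (N - 1)"
    and S_orth1: "ones_row N * S = 0\<^sub>m 1 (N - 1)"
    and S_orthn: "transpose_mat S * S = 1\<^sub>m (N - 1)"
  shows "ones_col N * ((1 / real N) \<cdot>\<^sub>m ones_row N) + S * transpose_mat S = 1\<^sub>m N"
proof -
  have NN: "1 + (N - 1) = N" using N by simp
  have U: "append_cols (ones_col N) S \<in> carrier_mat N N"
    using carrier_append_cols[OF _ S_dim, of "ones_col N" 1] NN by simp
  have V: "((1 / real N) \<cdot>\<^sub>m ones_row N) @\<^sub>r transpose_mat S \<in> carrier_mat N N"
    using carrier_append_rows[of "(1 / real N) \<cdot>\<^sub>m ones_row N" 1 N "transpose_mat S" "N - 1"] S_dim NN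
    by simp
  have "transpose_mat (ones_row N) = ones_col N" by (intro eq_matI) auto
  then have "transpose_mat S * ones_col N = transpose_mat (ones_row N * S)"
    using transpose_mult[of "ones_row N" 1 N S] S_dim by simp
  then have S_ones: "transpose_mat S * ones_col N = 0\<^sub>m (N - 1) 1"
    using S_orth1 by simp
  have "(1 / real N) \<cdot>\<^sub>m ones_row N * ones_col N = 1\<^sub>m 1"
    using N by (rule averaging_row_mult_ones_col)
  moreover have "(1 / real N) \<cdot>\<^sub>m ones_row N * S = 0\<^sub>m 1 (N - 1)"
    using S_orth1 S_dim by (simp add: mult_smult_assoc_mat[of _ 1 N])
  ultimately have "(((1 / real N) \<cdot>\<^sub>m ones_row N) @\<^sub>r transpose_mat S) * append_cols (ones_col N) S = 1\<^sub>m N"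
    using append_rows_mult_append_cols[of _ 1 N "transpose_mat S" "N - 1" "ones_col N" 1 S "N - 1"]
      S_dim S_ones S_orthn NN by simp
  then have "append_cols (ones_col N) S * (((1 / real N) \<cdot>\<^sub>m ones_row N) @\<^sub>r transpose_mat S) = 1\<^sub>m N"
    by (rule mat_mult_left_right_inverse[OF V U])
  then show ?thesis
    using append_cols_mult_append_rows[of "ones_col N" N 1 S "N - 1" "(1 / real N) \<cdot>\<^sub>m ones_row N" N
        "transpose_mat S"] S_dim by simp
qed

lemma Istack_eq_kron: "Istack N n = kron (ones_col N) (1\<^sub>m n)"
  unfolding Istack_def ..

lemma transpose_Istack_eq_kron: "transpose_mat (Istack N n) = kron (ones_row N) (1\<^sub>m n)"
proof -
  have "transpose_mat (ones_col N) = ones_row N" by (intro eq_matI) auto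
  then show ?thesis unfolding Istack_def transpose_kron_id by simp
qed

lemma carrier_Istack[simp]: "Istack N n \<in> carrier_mat (N * n) n"
  "dim_row (Istack N n) = N * n" "dim_col (Istack N n) = n"
  unfolding Istack_def carrier_mat_def by auto

lemma index_Istack: "l < N * n \<Longrightarrow> a < n \<Longrightarrow> Istack N n $$ (l, a) = (if l mod n = a then 1 else 0)"
  unfolding Istack_def by (subst index_kron_id) (auto simp: less_mult_imp_div_less)

lemma transpose_Istack_Suc:
  "transpose_mat (Istack (Suc N) n) = append_cols (1\<^sub>m n) (transpose_mat (Istack N n))"
proof -
  have "Istack (Suc N) n = 1\<^sub>m n @\<^sub>r Istack N n"
  proof (rule eq_matI)
    fix l a assume "l < dim_row (1\<^sub>m n @\<^sub>r Istack N n)" "a < dim_col (1\<^sub>m n @\<^sub>r Istack N n)"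
    then have l: "l < n + N * n" and a: "a < n" by (auto simp: append_rows_def)
    show "Istack (Suc N) n $$ (l, a) = (1\<^sub>m n @\<^sub>r Istack N n) $$ (l, a)"
      using l a by (cases "l < n") (auto simp: append_rows_def index_Istack le_mod_geq)
  qed (auto simp: append_rows_def)
  then show ?thesis unfolding append_cols_def by simp
qed

lemma carrier_hcat:
  "\<forall>i<length Ls. Ls ! i \<in> carrier_mat n (k i) \<Longrightarrow> hcat n Ls \<in> carrier_mat n (\<Sum>i<length Ls. k i)"
proof (induction Ls arbitrary: k)
  case (Cons L Ls)
  have "hcat n Ls \<in> carrier_mat n (\<Sum>i<length Ls. k (Suc i))" using Cons by fastforce
  moreover have "L \<in> carrier_mat n (k 0)" using Cons.prems by force
  moreover have "(\<Sum>i<length (L # Ls). k i) = k 0 + (\<Sum>i<length Ls. k (Suc i))"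
    by (simp only: length_Cons sum.lessThan_Suc_shift)
  ultimately show ?case by (simp add: hcat_def)
qed (simp add: hcat_def)

lemma carrier_vcat:
  "\<forall>i<length Cs. Cs ! i \<in> carrier_mat (k i) n \<Longrightarrow> vcat n Cs \<in> carrier_mat (\<Sum>i<length Cs. k i) n"
proof (induction Cs arbitrary: k)
  case (Cons C Cs)
  have "vcat n Cs \<in> carrier_mat (\<Sum>i<length Cs. k (Suc i)) n" using Cons by fastforce
  moreover have "C \<in> carrier_mat (k 0) n" using Cons.prems by force
  moreover have "(\<Sum>i<length (C # Cs). k i) = k 0 + (\<Sum>i<length Cs. k (Suc i))"
    by (simp only: length_Cons sum.lessThan_Suc_shift)
  ultimately show ?case by (simp add: vcat_def)
qed (simp add: vcat_def)

lemma carrier_diag_block_mat: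
  "\<forall>i<length Ls. Ls ! i \<in> carrier_mat n (k i) \<Longrightarrow>
   diag_block_mat Ls \<in> carrier_mat (length Ls * n) (\<Sum>i<length Ls. k i)"
proof (induction Ls arbitrary: k)
  case (Cons L Ls)
  have "diag_block_mat Ls \<in> carrier_mat (length Ls * n) (\<Sum>i<length Ls. k (Suc i))" using Cons by fastforce
  moreover have "L \<in> carrier_mat n (k 0)" using Cons.prems by force
  moreover have "(\<Sum>i<length (L # Ls). k i) = k 0 + (\<Sum>i<length Ls. k (Suc i))"
    by (simp only: length_Cons sum.lessThan_Suc_shift)
  ultimately show ?case by (auto simp: Let_def)
qed simp

lemma hcat_mult_vcat_index:
  assumes "length Cs = length Ls" "\<forall>i<length Ls. Ls ! i \<in> carrier_mat n (k i) \<and> Cs ! i \<in> carrier_mat (k i) n"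
    and "a < n" "b < n"
  shows "(hcat n Ls * vcat n Cs) $$ (a, b) = (\<Sum>i<length Ls. (Ls ! i * Cs ! i) $$ (a, b))"
  using assms
proof (induction Ls arbitrary: Cs k)
  case (Cons L Ls)
  obtain C Cs' where Cs: "Cs = C # Cs'" using Cons.prems(1) by (cases Cs) auto
  have dims: "\<forall>i<length Ls. Ls ! i \<in> carrier_mat n (k (Suc i)) \<and> Cs' ! i \<in> carrier_mat (k (Suc i)) n"
    using Cons.prems(2) Cs by auto
  have L: "L \<in> carrier_mat n (k 0)" and C: "C \<in> carrier_mat (k 0) n" using Cons.prems(2) Cs by force+
  have H: "hcat n Ls \<in> carrier_mat n (\<Sum>i<length Ls. k (Suc i))"
    using carrier_hcat[of Ls n "\<lambda>i. k (Suc i)"] dims by auto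
  have V: "vcat n Cs' \<in> carrier_mat (\<Sum>i<length Ls. k (Suc i)) n"
    using carrier_vcat[of Cs' "\<lambda>i. k (Suc i)" n] dims Cons.prems(1) Cs by auto
  have "hcat n (L # Ls) * vcat n Cs = L * C + hcat n Ls * vcat n Cs'"
    unfolding Cs using append_cols_mult_append_rows[OF L H C V] by (simp add: hcat_def vcat_def)
  then have "(hcat n (L # Ls) * vcat n Cs) $$ (a, b) = (L * C) $$ (a, b) + (hcat n Ls * vcat n Cs') $$ (a, b)"
    using Cons.prems(3,4) L C H V by simp
  also have "\<dots> = (\<Sum>i<length (L # Ls). ((L # Ls) ! i * Cs ! i) $$ (a, b))"
    using Cons.IH[of Cs' "\<lambda>i. k (Suc i)"] dims Cons.prems Cs
    by (simp only: length_Cons sum.lessThan_Suc_shift nth_Cons_0 nth_Cons_Suc)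
  finally show ?case .
qed (simp add: hcat_def vcat_def)

lemma transpose_Istack_mult_diag_block_mat:
  "\<forall>i<length Ls. Ls ! i \<in> carrier_mat n (k i) \<Longrightarrow>
   transpose_mat (Istack (length Ls) n) * diag_block_mat Ls = hcat n Ls"
proof (induction Ls arbitrary: k)
  case Nil
  then show ?case by (auto simp: hcat_def intro!: eq_matI)
next
  case (Cons L Ls)
  let ?T = "transpose_mat (Istack (length Ls) n)" and ?D = "diag_block_mat Ls"
    and ?c = "\<Sum>i<length Ls. k (Suc i)"
  have dims: "\<forall>i<length Ls. Ls ! i \<in> carrier_mat n (k (Suc i))" using Cons.prems by auto
  have L: "L \<in> carrier_mat n (k 0)" using Cons.prems by force
  have D: "?D \<in> carrier_mat (length Ls * n) ?c" using carrier_diag_block_mat[OF dims] .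
  have T: "?T \<in> carrier_mat n (length Ls * n)" by simp
  have "transpose_mat (Istack (length (L # Ls)) n) * diag_block_mat (L # Ls)
     = four_block_mat (1\<^sub>m n) ?T (0\<^sub>m 0 n) (0\<^sub>m 0 (length Ls * n)) *
       four_block_mat L (0\<^sub>m n ?c) (0\<^sub>m (length Ls * n) (k 0)) ?D"
    using L D by (simp add: transpose_Istack_Suc append_cols_eq_four_block_mat Let_def)
  also have "\<dots> = four_block_mat (1\<^sub>m n * L + ?T * 0\<^sub>m (length Ls * n) (k 0)) (1\<^sub>m n * 0\<^sub>m n ?c + ?T * ?D)
      (0\<^sub>m 0 n * L + 0\<^sub>m 0 (length Ls * n) * 0\<^sub>m (length Ls * n) (k 0))
      (0\<^sub>m 0 n * 0\<^sub>m n ?c + 0\<^sub>m 0 (length Ls * n) * ?D)"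
    by (rule mult_four_block_mat[OF one_carrier_mat T zero_carrier_mat zero_carrier_mat L
          zero_carrier_mat zero_carrier_mat D])
  also have "\<dots> = four_block_mat L (hcat n Ls) (0\<^sub>m 0 (k 0)) (0\<^sub>m 0 ?c)"
    using T L D Cons.IH[OF dims] carrier_hcat[OF dims] by (intro cong_four_block_mat) auto
  also have "\<dots> = hcat n (L # Ls)"
    using L carrier_hcat[OF dims] by (simp add: hcat_def append_cols_eq_four_block_mat)
  finally show ?case .
qed

lemma msum_index:
  "\<forall>M\<in>set Ms. M \<in> carrier_mat n n \<Longrightarrow> a < n \<Longrightarrow> b < n \<Longrightarrow>
   msum n Ms $$ (a, b) = (\<Sum>M\<leftarrow>Ms. M $$ (a, b))"
  and carrier_msum: "\<forall>M\<in>set Ms. M \<in> carrier_mat n n \<Longrightarrow> msum n Ms \<in> carrier_mat n n"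
  by (induction Ms) (auto simp: msum_def)

locale agent_system =
  fixes N n :: nat and p md :: "nat \<Rightarrow> nat" and A :: "real mat" and Bs Ks Cs Ls :: "real mat list"
  assumes A_carrier: "A \<in> carrier_mat n n"
    and length_Bs: "length Bs = N" and length_Ks: "length Ks = N"
    and length_Cs: "length Cs = N" and length_Ls: "length Ls = N"
    and B_carrier: "\<And>i. i < N \<Longrightarrow> Bs ! i \<in> carrier_mat n (p i)"
    and K_carrier: "\<And>i. i < N \<Longrightarrow> Ks ! i \<in> carrier_mat (p i) n"
    and C_carrier: "\<And>i. i < N \<Longrightarrow> Cs ! i \<in> carrier_mat (md i) n"
    and L_carrier: "\<And>i. i < N \<Longrightarrow> Ls ! i \<in> carrier_mat n (md i)"
begin

abbreviation error_dynamics_mat :: "real \<Rightarrow> (nat \<Rightarrow> nat \<Rightarrow> bool) \<Rightarrow> real mat" where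
  "error_dynamics_mat \<eta> E \<equiv> Fbar N n A Bs Ks Cs Ls - \<eta> \<cdot>\<^sub>m kron (laplacian N E) (1\<^sub>m n)"

lemma BK_carrier: "j < N \<Longrightarrow> Bs ! j * Ks ! j \<in> carrier_mat n n"
  by (rule mult_carrier_mat[OF B_carrier K_carrier])

lemma LC_carrier: "j < N \<Longrightarrow> Ls ! j * Cs ! j \<in> carrier_mat n n"
  by (rule mult_carrier_mat[OF L_carrier C_carrier])

lemma Abk_carrier: "Abk n A Bs Ks \<in> carrier_mat n n"
  and Abk_index: "a < n \<Longrightarrow> b < n \<Longrightarrow>
    Abk n A Bs Ks $$ (a, b) = A $$ (a, b) + (\<Sum>j<N. (Bs ! j * Ks ! j) $$ (a, b))"
proof -
  let ?Ms = "map (\<lambda>i. Bs ! i * Ks ! i) [0..<length Bs]"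
  have Ms: "\<forall>M\<in>set ?Ms. M \<in> carrier_mat n n" using BK_carrier length_Bs by auto
  then show "Abk n A Bs Ks \<in> carrier_mat n n"
    unfolding Abk_def using carrier_msum[OF Ms] by simp
  assume "a < n" "b < n"
  then show "Abk n A Bs Ks $$ (a, b) = A $$ (a, b) + (\<Sum>j<N. (Bs ! j * Ks ! j) $$ (a, b))"
    unfolding Abk_def using A_carrier Ms carrier_msum[OF Ms] msum_index[OF Ms] length_Bs
    by (simp add: interv_sum_list_conv_sum_set_nat lessThan_atLeast0 comp_def)
qed

lemma Fbar_carrier[simp]: "Fbar N n A Bs Ks Cs Ls \<in> carrier_mat (N * n) (N * n)"
  "dim_row (Fbar N n A Bs Ks Cs Ls) = N * n" "dim_col (Fbar N n A Bs Ks Cs Ls) = N * n"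
  unfolding Fbar_def by auto

lemma error_dynamics_carrier[simp]: "error_dynamics_mat \<eta> E \<in> carrier_mat (N * n) (N * n)"
  by auto

lemma Hmat_carrier[simp]: "Hmat N n A Bs Ks Cs Ls \<in> carrier_mat n (N * n)"
  "dim_row (Hmat N n A Bs Ks Cs Ls) = n" "dim_col (Hmat N n A Bs Ks Cs Ls) = N * n"
  unfolding Hmat_def by auto

lemma Fbar_index:
  assumes "i < N" "j < N" "a < n" "b < n"
  shows "Fbar N n A Bs Ks Cs Ls $$ (i * n + a, j * n + b) =
    (if i = j then Abk n A Bs Ks $$ (a, b) - real N * (Ls ! i * Cs ! i) $$ (a, b) - (Bs ! i * Ks ! i) $$ (a, b)
     else - (Bs ! j * Ks ! j) $$ (a, b))"
  using assms mult_add_less_mult[of i N a n] mult_add_less_mult[of j N b n]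
    carrier_matD[OF Abk_carrier] carrier_matD[OF BK_carrier] carrier_matD[OF LC_carrier]
  by (simp add: Fbar_def Let_def del: index_mult_mat dim_row_mat dim_col_mat)

lemma Hmat_index:
  assumes "j < N" "a < n" "b < n"
  shows "Hmat N n A Bs Ks Cs Ls $$ (a, j * n + b) =
    Abk n A Bs Ks $$ (a, b) / real N - (Bs ! j * Ks ! j) $$ (a, b) - (Ls ! j * Cs ! j) $$ (a, b)"
  using assms mult_add_less_mult[of j N b n]
    carrier_matD[OF Abk_carrier] carrier_matD[OF BK_carrier] carrier_matD[OF LC_carrier]
  by (simp add: Hmat_def Let_def del: index_mult_mat dim_row_mat dim_col_mat)

lemma hcat_Ls_carrier: "hcat n Ls \<in> carrier_mat n (\<Sum>i<N. md i)"
  using carrier_hcat[of Ls n md] L_carrier length_Ls by auto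

lemma vcat_Cs_carrier: "vcat n Cs \<in> carrier_mat (\<Sum>i<N. md i) n"
  using carrier_vcat[of Cs md n] C_carrier length_Cs by auto

lemma diag_block_Ls_carrier: "diag_block_mat Ls \<in> carrier_mat (N * n) (\<Sum>i<N. md i)"
  using carrier_diag_block_mat[of Ls n md] L_carrier length_Ls by auto

lemma Jbar_carrier: "Jbar N Ls \<in> carrier_mat (N * n) (\<Sum>i<N. md i)"
  unfolding Jbar_def using diag_block_Ls_carrier by simp

lemma transpose_Istack_mult_Fbar:
  "transpose_mat (Istack N n) * Fbar N n A Bs Ks Cs Ls = real N \<cdot>\<^sub>m Hmat N n A Bs Ks Cs Ls"
proof (rule eq_matI)
  fix a c assume "a < dim_row (real N \<cdot>\<^sub>m Hmat N n A Bs Ks Cs Ls)" "c < dim_col (real N \<cdot>\<^sub>m Hmat N n A Bs Ks Cs Ls)"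
  then have a: "a < n" and c: "c < N * n" by auto
  obtain j b where c_eq: "c = j * n + b" and j: "j < N" and b: "b < n" using index_decompose[OF c] by blast
  let ?F = "Fbar N n A Bs Ks Cs Ls"
  have "(transpose_mat (Istack N n) * ?F) $$ (a, c) = (\<Sum>l<N * n. transpose_mat (Istack N n) $$ (a, l) * ?F $$ (l, c))"
    using a c by (intro index_mult_mat_sum) auto
  also have "\<dots> = (\<Sum>i<N. \<Sum>b'<n. transpose_mat (Istack N n) $$ (a, i * n + b') * ?F $$ (i * n + b', c))"
    by (rule sum_lessThan_mult_split)
  also have "\<dots> = (\<Sum>i<N. ?F $$ (i * n + a, j * n + b))"
    using a c_eq by (simp add: index_Istack mult_add_less_mult if_distrib[of "\<lambda>x. x * _"] sum.delta
        cong: if_cong)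
  also have "\<dots> = (\<Sum>i<N. (if i = j then Abk n A Bs Ks $$ (a, b) - real N * (Ls ! j * Cs ! j) $$ (a, b) else 0)
      - (Bs ! j * Ks ! j) $$ (a, b))"
    using a b j by (intro sum.cong refl) (auto simp: Fbar_index)
  also have "\<dots> = real N * (Abk n A Bs Ks $$ (a, b) / real N - (Bs ! j * Ks ! j) $$ (a, b) - (Ls ! j * Cs ! j) $$ (a, b))"
    using j by (simp add: sum_subtractf sum.delta algebra_simps)
  also have "\<dots> = (real N \<cdot>\<^sub>m Hmat N n A Bs Ks Cs Ls) $$ (a, c)"
    using a b j c c_eq by (simp add: Hmat_index)
  finally show "(transpose_mat (Istack N n) * ?F) $$ (a, c) = (real N \<cdot>\<^sub>m Hmat N n A Bs Ks Cs Ls) $$ (a, c)" .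
qed auto

lemma Hmat_mult_Istack:
  assumes "N > 0"
  shows "Hmat N n A Bs Ks Cs Ls * Istack N n = A - hcat n Ls * vcat n Cs"
proof (rule eq_matI)
  fix a b assume "a < dim_row (A - hcat n Ls * vcat n Cs)" "b < dim_col (A - hcat n Ls * vcat n Cs)"
  then have a: "a < n" and b: "b < n" using hcat_Ls_carrier vcat_Cs_carrier by auto
  let ?H = "Hmat N n A Bs Ks Cs Ls"
  have "(?H * Istack N n) $$ (a, b) = (\<Sum>l<N * n. ?H $$ (a, l) * Istack N n $$ (l, b))"
    using a b by (intro index_mult_mat_sum) auto
  also have "\<dots> = (\<Sum>j<N. \<Sum>b'<n. ?H $$ (a, j * n + b') * Istack N n $$ (j * n + b', b))"
    by (rule sum_lessThan_mult_split)
  also have "\<dots> = (\<Sum>j<N. ?H $$ (a, j * n + b))"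
    using b by (simp add: index_Istack mult_add_less_mult if_distrib[of "\<lambda>x. _ * x"] sum.delta
        cong: if_cong)
  also have "\<dots> = (\<Sum>j<N. Abk n A Bs Ks $$ (a, b) / real N - (Bs ! j * Ks ! j) $$ (a, b) - (Ls ! j * Cs ! j) $$ (a, b))"
    using a b by (intro sum.cong refl) (auto simp: Hmat_index)
  also have "\<dots> = A $$ (a, b) - (\<Sum>j<N. (Ls ! j * Cs ! j) $$ (a, b))"
    using a b assms by (simp add: sum_subtractf Abk_index)
  also have "\<dots> = (A - hcat n Ls * vcat n Cs) $$ (a, b)"
    using a b A_carrier hcat_Ls_carrier vcat_Cs_carrier C_carrier L_carrier length_Cs length_Ls
      hcat_mult_vcat_index[of Cs Ls n md a b] by simp
  finally show "(?H * Istack N n) $$ (a, b) = (A - hcat n Ls * vcat n Cs) $$ (a, b)" .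
qed (use A_carrier hcat_Ls_carrier vcat_Cs_carrier in auto)

end

section \<open>Average and disagreement coordinates\<close>

definition Ebar_inv :: "nat \<Rightarrow> nat \<Rightarrow> real mat \<Rightarrow> real mat" where
  "Ebar_inv N n S = ((1 / real N) \<cdot>\<^sub>m transpose_mat (Istack N n)) @\<^sub>r kron (transpose_mat S) (1\<^sub>m n)"

lemma averaging_eq_kron:
  "(1 / real N) \<cdot>\<^sub>m transpose_mat (Istack N n) = kron ((1 / real N) \<cdot>\<^sub>m ones_row N) (1\<^sub>m n)"
  unfolding transpose_Istack_eq_kron smult_kron_id ..

lemma carrier_Ebar:
  assumes "N \<ge> 1" "S \<in> carrier_mat N (N - 1)"
  shows "Ebar N n S \<in> carrier_mat (N * n) (N * n)"
proof -
  have "n + (N - 1) * n = N * n" using assms(1) by (cases N) auto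
  then show ?thesis
    unfolding Ebar_def
    using carrier_append_cols[OF carrier_Istack(1)[of N n] carrier_kron_id[OF assms(2), of n]] by simp
qed

lemma carrier_Ebar_inv:
  assumes "N \<ge> 1" "S \<in> carrier_mat N (N - 1)"
  shows "Ebar_inv N n S \<in> carrier_mat (N * n) (N * n)"
proof -
  have "n + (N - 1) * n = N * n" using assms(1) by (cases N) auto
  moreover have "(1 / real N) \<cdot>\<^sub>m transpose_mat (Istack N n) \<in> carrier_mat n (N * n)" by simp
  moreover have "kron (transpose_mat S) (1\<^sub>m n) \<in> carrier_mat ((N - 1) * n) (N * n)"
    using assms(2) by (intro carrier_kron_id) simp
  ultimately show ?thesis
    unfolding Ebar_inv_def by (metis carrier_append_rows)
qed

lemma Ebar_mult_Ebar_inv: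
  assumes N: "N \<ge> 1" and S_dim: "S \<in> carrier_mat N (N - 1)"
    and S_orth1: "ones_row N * S = 0\<^sub>m 1 (N - 1)" and S_orthn: "transpose_mat S * S = 1\<^sub>m (N - 1)"
  shows "Ebar N n S * Ebar_inv N n S = 1\<^sub>m (N * n)"
proof -
  have St: "transpose_mat S \<in> carrier_mat (N - 1) N" using S_dim by simp
  have "Ebar N n S * Ebar_inv N n S
      = Istack N n * ((1 / real N) \<cdot>\<^sub>m transpose_mat (Istack N n)) + kron S (1\<^sub>m n) * kron (transpose_mat S) (1\<^sub>m n)"
    unfolding Ebar_def Ebar_inv_def using S_dim St by (intro append_cols_mult_append_rows) auto
  also have "Istack N n * ((1 / real N) \<cdot>\<^sub>m transpose_mat (Istack N n))
      = kron (ones_col N * ((1 / real N) \<cdot>\<^sub>m ones_row N)) (1\<^sub>m n)"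
    unfolding averaging_eq_kron unfolding Istack_eq_kron by (rule mult_kron_id) auto
  also have "kron S (1\<^sub>m n) * kron (transpose_mat S) (1\<^sub>m n) = kron (S * transpose_mat S) (1\<^sub>m n)"
    using S_dim St by (rule mult_kron_id)
  also have "kron (ones_col N * ((1 / real N) \<cdot>\<^sub>m ones_row N)) (1\<^sub>m n) + kron (S * transpose_mat S) (1\<^sub>m n)
      = kron (ones_col N * ((1 / real N) \<cdot>\<^sub>m ones_row N) + S * transpose_mat S) (1\<^sub>m n)"
    using S_dim by (intro add_kron_id[of _ N N]) auto
  finally show ?thesis
    using ones_projection_add_S_S_transpose[OF N S_dim S_orth1 S_orthn] by (simp add: kron_id_id)
qed

lemma Wbar_eq_Ebar_inv_mult_Istack:
  assumes "N \<ge> 1" "S \<in> carrier_mat N (N - 1)"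
  shows "Wbar N n S = Ebar_inv N n S * Istack N n"
proof -
  have "(1 / real N) \<cdot>\<^sub>m transpose_mat (Istack N n) * Istack N n
      = kron ((1 / real N) \<cdot>\<^sub>m ones_row N * ones_col N) (1\<^sub>m n)"
    unfolding averaging_eq_kron unfolding Istack_eq_kron by (rule mult_kron_id) auto
  also have "\<dots> = 1\<^sub>m n"
    using averaging_row_mult_ones_col[OF assms(1)] kron_id_id[of 1 n] by simp
  finally show ?thesis
    unfolding Wbar_def Ebar_inv_def using assms(2)
    by (subst append_rows_mult[of _ n "N * n" _ "(N - 1) * n" _ n]) auto
qed

lemma transpose_Istack_mult_kron_laplacian:
  "undirected_graph N E \<Longrightarrow> transpose_mat (Istack N n) * kron (laplacian N E) (1\<^sub>m n) = 0\<^sub>m n (N * n)"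
  using mult_kron_id[of "ones_row N" 1 N "laplacian N E" N n] ones_row_mult_laplacian[of N E]
  by (simp add: transpose_Istack_eq_kron kron_zero_id)

lemma kron_laplacian_mult_Istack:
  "undirected_graph N E \<Longrightarrow> kron (laplacian N E) (1\<^sub>m n) * Istack N n = 0\<^sub>m (N * n) n"
  using mult_kron_id[of "laplacian N E" N N "ones_col N" 1 n] laplacian_mult_ones_col[of N E]
  by (simp add: Istack_eq_kron kron_zero_id)

context agent_system
begin

lemma Vbar_eq_Ebar_inv_mult_Jbar:
  assumes N: "N \<ge> 1" and S_dim: "S \<in> carrier_mat N (N - 1)"
  shows "Vbar N n S Ls = Ebar_inv N n S * Jbar N Ls"
proof -
  let ?D = "diag_block_mat Ls"
  have "(1 / real N) \<cdot>\<^sub>m transpose_mat (Istack N n) * Jbar N Ls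
      = real N \<cdot>\<^sub>m ((1 / real N) \<cdot>\<^sub>m (transpose_mat (Istack N n) * ?D))"
    unfolding Jbar_def using diag_block_Ls_carrier
    by (simp add: mult_smult_assoc_mat[of _ n "N * n"] mult_smult_distrib[of _ n "N * n"])
  also have "transpose_mat (Istack N n) * ?D = hcat n Ls"
    using transpose_Istack_mult_diag_block_mat[of Ls n md] L_carrier length_Ls by simp
  finally have "(1 / real N) \<cdot>\<^sub>m transpose_mat (Istack N n) * Jbar N Ls = hcat n Ls"
    using N by (auto intro!: eq_matI)
  then show ?thesis
    unfolding Vbar_def Ebar_inv_def using S_dim Jbar_carrier
    by (subst append_rows_mult[of _ n "N * n" _ "(N - 1) * n"]) auto
qed

lemma averaging_mult_error_dynamics:
  assumes N: "N \<ge> 1" and graph: "undirected_graph N E"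
  shows "(1 / real N) \<cdot>\<^sub>m transpose_mat (Istack N n) * error_dynamics_mat \<eta> E = Hmat N n A Bs Ks Cs Ls"
proof -
  let ?F = "Fbar N n A Bs Ks Cs Ls" and ?kL = "kron (laplacian N E) (1\<^sub>m n)"
    and ?IsN = "(1 / real N) \<cdot>\<^sub>m transpose_mat (Istack N n)"
  have kL: "?kL \<in> carrier_mat (N * n) (N * n)" and IsN: "?IsN \<in> carrier_mat n (N * n)" by auto
  have "?IsN * error_dynamics_mat \<eta> E = ?IsN * ?F - \<eta> \<cdot>\<^sub>m (?IsN * ?kL)"
    using mult_minus_distrib_mat[OF IsN Fbar_carrier(1) smult_carrier_mat[OF kL]] mult_smult_distrib[OF IsN kL]
    by simp
  also have "?IsN * ?F = (1 / real N) \<cdot>\<^sub>m (real N \<cdot>\<^sub>m Hmat N n A Bs Ks Cs Ls)"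
    using mult_smult_assoc_mat[of "transpose_mat (Istack N n)" n "N * n" ?F "N * n" "1 / real N"]
    by (simp add: transpose_Istack_mult_Fbar)
  also have "?IsN * ?kL = 0\<^sub>m n (N * n)"
    using mult_smult_assoc_mat[of "transpose_mat (Istack N n)" n "N * n" ?kL "N * n" "1 / real N"]
    by (simp add: transpose_Istack_mult_kron_laplacian[OF graph])
  finally show ?thesis
    using N by (auto intro!: eq_matI)
qed

lemma error_dynamics_mult_Istack:
  assumes "undirected_graph N E"
  shows "error_dynamics_mat \<eta> E * Istack N n = Fbar N n A Bs Ks Cs Ls * Istack N n"
proof -
  have kL: "kron (laplacian N E) (1\<^sub>m n) \<in> carrier_mat (N * n) (N * n)" by auto
  show ?thesis
    using minus_mult_distrib_mat[OF Fbar_carrier(1) smult_carrier_mat[OF kL] carrier_Istack(1)]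
      mult_smult_assoc_mat[OF kL carrier_Istack(1)]
    by (simp add: kron_laplacian_mult_Istack[OF assms]) (auto intro!: eq_matI)
qed

lemma disagreement_error_dynamics:
  assumes S_dim: "S \<in> carrier_mat N (N - 1)" and S_diag: "transpose_mat S * laplacian N E * S = \<Lambda>"
  shows "kron (transpose_mat S) (1\<^sub>m n) * error_dynamics_mat \<eta> E * kron S (1\<^sub>m n) =
    kron (transpose_mat S) (1\<^sub>m n) * Fbar N n A Bs Ks Cs Ls * kron S (1\<^sub>m n) - \<eta> \<cdot>\<^sub>m kron \<Lambda> (1\<^sub>m n)"
proof -
  let ?F = "Fbar N n A Bs Ks Cs Ls" and ?kL = "kron (laplacian N E) (1\<^sub>m n)"
    and ?SI = "kron S (1\<^sub>m n)" and ?StI = "kron (transpose_mat S) (1\<^sub>m n)"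
  have St: "transpose_mat S \<in> carrier_mat (N - 1) N" using S_dim by simp
  have kL: "?kL \<in> carrier_mat (N * n) (N * n)" by auto
  have SI: "?SI \<in> carrier_mat (N * n) ((N - 1) * n)" and StI: "?StI \<in> carrier_mat ((N - 1) * n) (N * n)"
    using S_dim St by auto
  have "?StI * error_dynamics_mat \<eta> E * ?SI = (?StI * ?F - \<eta> \<cdot>\<^sub>m (?StI * ?kL)) * ?SI"
    using mult_minus_distrib_mat[OF StI Fbar_carrier(1) smult_carrier_mat[OF kL]] mult_smult_distrib[OF StI kL]
    by simp
  also have "\<dots> = ?StI * ?F * ?SI - \<eta> \<cdot>\<^sub>m (?StI * ?kL * ?SI)"
    using minus_mult_distrib_mat[OF mult_carrier_mat[OF StI Fbar_carrier(1)]
        smult_carrier_mat[OF mult_carrier_mat[OF StI kL]] SI]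
      mult_smult_assoc_mat[OF mult_carrier_mat[OF StI kL] SI]
    by simp
  also have "?StI * ?kL * ?SI = kron \<Lambda> (1\<^sub>m n)"
    using mult_kron_id[OF St carrier_laplacian(1)[of N E], of n]
      mult_kron_id[OF mult_carrier_mat[OF St carrier_laplacian(1)[of N E]] S_dim, of n] S_diag
    by simp
  finally show ?thesis .
qed

lemma Aebar_eq_similarity:
  assumes N: "N \<ge> 1" and graph: "undirected_graph N E" and S_dim: "S \<in> carrier_mat N (N - 1)"
    and S_diag: "transpose_mat S * laplacian N E * S = \<Lambda>"
  shows "Aebar N n A Bs Ks Cs Ls \<eta> S \<Lambda> = Ebar_inv N n S * error_dynamics_mat \<eta> E * Ebar N n S"
proof -
  let ?X = "error_dynamics_mat \<eta> E" and ?Is = "Istack N n"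
    and ?IsN = "(1 / real N) \<cdot>\<^sub>m transpose_mat (Istack N n)"
    and ?SI = "kron S (1\<^sub>m n)" and ?StI = "kron (transpose_mat S) (1\<^sub>m n)"
  have IsN: "?IsN \<in> carrier_mat n (N * n)" and X: "?X \<in> carrier_mat (N * n) (N * n)" by auto
  have SI: "?SI \<in> carrier_mat (N * n) ((N - 1) * n)" and StI: "?StI \<in> carrier_mat ((N - 1) * n) (N * n)"
    using S_dim by auto
  have "Ebar_inv N n S * ?X * Ebar N n S
      = four_block_mat (?IsN * ?X * ?Is) (?IsN * ?X * ?SI) (?StI * ?X * ?Is) (?StI * ?X * ?SI)"
    unfolding Ebar_inv_def Ebar_def append_rows_mult[OF IsN StI X]
    by (rule append_rows_mult_append_cols[OF mult_carrier_mat[OF IsN X] mult_carrier_mat[OF StI X]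
          carrier_Istack(1) SI])
  also have "\<dots> = Aebar N n A Bs Ks Cs Ls \<eta> S \<Lambda>"
    unfolding Aebar_def Let_def averaging_mult_error_dynamics[OF N graph]
      disagreement_error_dynamics[OF S_dim S_diag]
    using Hmat_mult_Istack N assoc_mult_mat[OF StI X carrier_Istack(1)]
      assoc_mult_mat[OF StI Fbar_carrier(1) carrier_Istack(1)] error_dynamics_mult_Istack[OF graph]
    by simp
  finally show ?thesis ..
qed

end

section \<open>Quadratic forms\<close>

lemma DERIV_quadratic_form:
  fixes e :: "real \<Rightarrow> real vec"
  assumes e: "\<forall>s. e s \<in> carrier_vec K" and P: "P \<in> carrier_mat K K" and d: "d \<in> carrier_vec K"
    and der: "\<forall>i<K. ((\<lambda>s. e s $ i) has_real_derivative d $ i) (at t)"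
  shows "((\<lambda>s. e s \<bullet> (P *\<^sub>v e s)) has_real_derivative d \<bullet> (P *\<^sub>v e t) + e t \<bullet> (P *\<^sub>v d)) (at t)"
proof -
  have sum_form: "x \<bullet> (P *\<^sub>v y) = (\<Sum>i<K. x $ i * (\<Sum>j<K. P $$ (i, j) * y $ j))"
    if "x \<in> carrier_vec K" "y \<in> carrier_vec K" for x y
    using that P by (simp add: scalar_prod_def lessThan_atLeast0)
  have "((\<lambda>s. \<Sum>i<K. e s $ i * (\<Sum>j<K. P $$ (i, j) * e s $ j)) has_real_derivative
      (\<Sum>i<K. d $ i * (\<Sum>j<K. P $$ (i, j) * e t $ j) + (\<Sum>j<K. P $$ (i, j) * d $ j) * e t $ i)) (at t)"
    using der by (intro DERIV_sum DERIV_mult DERIV_cmult) auto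
  moreover have "(\<Sum>i<K. d $ i * (\<Sum>j<K. P $$ (i, j) * e t $ j) + (\<Sum>j<K. P $$ (i, j) * d $ j) * e t $ i)
      = d \<bullet> (P *\<^sub>v e t) + e t \<bullet> (P *\<^sub>v d)"
    using e d by (simp add: sum_form sum.distrib ac_simps)
  ultimately show ?thesis
    using e by (simp add: sum_form)
qed

lemma smult_mat_mult_vec:
  "A \<in> carrier_mat nr nc \<Longrightarrow> x \<in> carrier_vec nc \<Longrightarrow> (c \<cdot>\<^sub>m A) *\<^sub>v x = c \<cdot>\<^sub>v (A *\<^sub>v (x :: real vec))"
  by (rule eq_vecI) (auto simp: scalar_prod_def sum_distrib_left ac_simps)

lemma scalar_prod_transpose_mult_vec:
  "A \<in> carrier_mat nr nc \<Longrightarrow> x \<in> carrier_vec nc \<Longrightarrow> y \<in> carrier_vec nr \<Longrightarrow>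
   x \<bullet> (transpose_mat A *\<^sub>v y) = (A *\<^sub>v x) \<bullet> (y :: real vec)"
  using transpose_vec_mult_scalar[of A nr nc x y] comm_scalar_prod[of x nc "transpose_mat A *\<^sub>v y"]
    comm_scalar_prod[of y nr "A *\<^sub>v x"] by auto

lemma scalar_prod_congruence:
  assumes E: "E \<in> carrier_mat K k" and P: "P \<in> carrier_mat K K" and u: "u \<in> carrier_vec k" and y: "y \<in> carrier_vec k"
  shows "u \<bullet> ((transpose_mat E * P * E) *\<^sub>v y) = (E *\<^sub>v u) \<bullet> (P *\<^sub>v (E *\<^sub>v (y :: real vec)))"
proof -
  have "(transpose_mat E * P * E) *\<^sub>v y = transpose_mat E *\<^sub>v (P *\<^sub>v (E *\<^sub>v y))"
  proof -
    have Et: "transpose_mat E \<in> carrier_mat k K" using E by simp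
    show ?thesis
      using assoc_mult_mat_vec[OF mult_carrier_mat[OF Et P] E y] assoc_mult_mat_vec[OF Et P mult_mat_vec_carrier[OF E y]]
      by simp
  qed
  then show ?thesis
    using scalar_prod_transpose_mult_vec[OF E u, of "P *\<^sub>v (E *\<^sub>v y)"] E P y by simp
qed

lemma four_block_mat_quadratic_form:
  assumes A: "A \<in> carrier_mat k1 k1" and B: "B \<in> carrier_mat k1 k2" and C: "C \<in> carrier_mat k2 k1"
    and D: "D \<in> carrier_mat k2 k2" and x: "x \<in> carrier_vec k1" and y: "y \<in> carrier_vec k2"
  shows "(x @\<^sub>v y) \<bullet> (four_block_mat A B C D *\<^sub>v (x @\<^sub>v y)) =
    x \<bullet> (A *\<^sub>v x) + x \<bullet> (B *\<^sub>v y) + y \<bullet> (C *\<^sub>v x) + y \<bullet> (D *\<^sub>v (y :: real vec))"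
  using A B C D x y
  by (simp add: four_block_mat_mult_vec[OF A B C D x y] scalar_prod_append[of x k1 y k2]
      scalar_prod_add_distrib[of _ k1] scalar_prod_add_distrib[of _ k2])

lemma scalar_prod_append_rows_zero_mult_vec:
  assumes B: "B \<in> carrier_mat k1 m" and x: "x \<in> carrier_vec k1" and w: "w \<in> carrier_vec k2"
    and v: "v \<in> carrier_vec m"
  shows "(x @\<^sub>v w) \<bullet> ((B @\<^sub>r 0\<^sub>m k2 m) *\<^sub>v v) = x \<bullet> (B *\<^sub>v (v :: real vec))"
proof -
  have "0\<^sub>m k2 m *\<^sub>v v = 0\<^sub>v k2" by (rule eq_vecI) (use v in \<open>auto simp: scalar_prod_def\<close>)
  then show ?thesis
    using mat_mult_append[OF B zero_carrier_mat v] scalar_prod_append[OF x w mult_mat_vec_carrier[OF B v]]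
      w by simp
qed

lemma scalar_prod_append_cols_zero_mult_vec:
  assumes C: "C \<in> carrier_mat m k1" and x: "x \<in> carrier_vec k1" and w: "w \<in> carrier_vec k2"
    and v: "v \<in> carrier_vec m"
  shows "v \<bullet> (append_cols C (0\<^sub>m m k2) *\<^sub>v (x @\<^sub>v w)) = v \<bullet> (C *\<^sub>v (x :: real vec))"
proof -
  have "0\<^sub>m m k2 *\<^sub>v w = 0\<^sub>v m" by (rule eq_vecI) (use w in \<open>auto simp: scalar_prod_def\<close>)
  then show ?thesis
    using append_cols_mult_vec[OF C zero_carrier_mat x w] C x by simp
qed

lemma lyapunov_quadratic_form:
  assumes M: "M \<in> carrier_mat K K" and Ae: "Ae \<in> carrier_mat K K" and x: "x \<in> carrier_vec K"
  shows "x \<bullet> ((c \<cdot>\<^sub>m M - transpose_mat Ae * M - M * Ae) *\<^sub>v x) =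
    c * (x \<bullet> (M *\<^sub>v x)) - (Ae *\<^sub>v x) \<bullet> (M *\<^sub>v x) - x \<bullet> (M *\<^sub>v (Ae *\<^sub>v (x :: real vec)))"
proof -
  have AtM: "transpose_mat Ae * M \<in> carrier_mat K K" and MAe: "M * Ae \<in> carrier_mat K K"
    and cM: "c \<cdot>\<^sub>m M \<in> carrier_mat K K" and Mx: "M *\<^sub>v x \<in> carrier_vec K" using M Ae x by auto
  have "(c \<cdot>\<^sub>m M - transpose_mat Ae * M - M * Ae) *\<^sub>v x
      = c \<cdot>\<^sub>v (M *\<^sub>v x) - transpose_mat Ae *\<^sub>v (M *\<^sub>v x) - M *\<^sub>v (Ae *\<^sub>v x)"
    using minus_mult_distrib_mat_vec[OF minus_carrier_mat[OF AtM] MAe x]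
      minus_mult_distrib_mat_vec[OF cM AtM x] smult_mat_mult_vec[OF M x] M Ae x by simp
  then show ?thesis
    using scalar_prod_transpose_mult_vec[OF Ae x Mx] M Ae x Mx
    by (simp add: scalar_prod_minus_distrib[of _ K])
qed

lemma LMI_mat_quadratic_form:
  fixes x w v :: "real vec"
  assumes M: "M \<in> carrier_mat K K" and Ae: "Ae \<in> carrier_mat K K" and W: "W \<in> carrier_mat K n"
    and V: "V \<in> carrier_mat K m" and Q: "Q \<in> carrier_mat n n" and R: "R \<in> carrier_mat m m"
    and x: "x \<in> carrier_vec K" and w: "w \<in> carrier_vec n" and v: "v \<in> carrier_vec m"
  defines "y \<equiv> Ae *\<^sub>v x + W *\<^sub>v w - V *\<^sub>v v"
  shows "((x @\<^sub>v w) @\<^sub>v v) \<bullet> (LMI_mat n m \<gamma> \<alpha> M Ae W V Q R *\<^sub>v ((x @\<^sub>v w) @\<^sub>v v)) =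
    (\<gamma> - 2 * \<alpha>) * (x \<bullet> (M *\<^sub>v x)) - (y \<bullet> (M *\<^sub>v x) + x \<bullet> (M *\<^sub>v y))
    + \<alpha> * (w \<bullet> (Q *\<^sub>v w)) + \<alpha> * (v \<bullet> (R *\<^sub>v v))"
proof -
  let ?T11 = "(\<gamma> - 2 * \<alpha>) \<cdot>\<^sub>m M - transpose_mat Ae * M - M * Ae"
  have T11: "?T11 \<in> carrier_mat K K" using M Ae by auto
  have T: "four_block_mat ?T11 (- (M * W)) (- (transpose_mat W * M)) (\<alpha> \<cdot>\<^sub>m Q) \<in> carrier_mat (K + n) (K + n)"
    using T11 M W Q by (intro four_block_carrier_mat) auto
  have B: "M * V @\<^sub>r 0\<^sub>m n m \<in> carrier_mat (K + n) m" using M V by auto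
  have C: "append_cols (transpose_mat V * M) (0\<^sub>m m n) \<in> carrier_mat m (K + n)" using M V by auto
  have xw: "x @\<^sub>v w \<in> carrier_vec (K + n)" using x w by auto
  have Mx: "M *\<^sub>v x \<in> carrier_vec K" and Aex: "Ae *\<^sub>v x \<in> carrier_vec K" and Ww: "W *\<^sub>v w \<in> carrier_vec K"
    and Vv: "V *\<^sub>v v \<in> carrier_vec K" using M Ae W V x w v by auto
  have y_form: "y \<bullet> (M *\<^sub>v x) + x \<bullet> (M *\<^sub>v y) = (Ae *\<^sub>v x) \<bullet> (M *\<^sub>v x) + (W *\<^sub>v w) \<bullet> (M *\<^sub>v x) - (V *\<^sub>v v) \<bullet> (M *\<^sub>v x)
      + x \<bullet> (M *\<^sub>v (Ae *\<^sub>v x)) + x \<bullet> (M *\<^sub>v (W *\<^sub>v w)) - x \<bullet> (M *\<^sub>v (V *\<^sub>v v))"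
    unfolding y_def using M x Mx Aex Ww Vv
    by (simp add: mult_add_distrib_mat_vec[of _ K K] mult_minus_distrib_mat_vec[of _ K K]
        add_scalar_prod_distrib[of _ K] minus_scalar_prod_distrib[of _ K]
        scalar_prod_add_distrib[of _ K] scalar_prod_minus_distrib[of _ K])
  have "((x @\<^sub>v w) @\<^sub>v v) \<bullet> (LMI_mat n m \<gamma> \<alpha> M Ae W V Q R *\<^sub>v ((x @\<^sub>v w) @\<^sub>v v)) =
      x \<bullet> (?T11 *\<^sub>v x) + x \<bullet> (- (M * W) *\<^sub>v w) + w \<bullet> (- (transpose_mat W * M) *\<^sub>v x) + w \<bullet> ((\<alpha> \<cdot>\<^sub>m Q) *\<^sub>v w)
      + (x @\<^sub>v w) \<bullet> ((M * V @\<^sub>r 0\<^sub>m n m) *\<^sub>v v) + v \<bullet> (append_cols (transpose_mat V * M) (0\<^sub>m m n) *\<^sub>v (x @\<^sub>v w))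
      + v \<bullet> ((\<alpha> \<cdot>\<^sub>m R) *\<^sub>v v)"
    unfolding LMI_mat_def four_block_mat_quadratic_form[OF T B C smult_carrier_mat[OF R] xw v]
      four_block_mat_quadratic_form[OF T11 uminus_carrier_mat[OF mult_carrier_mat[OF M W]]
        uminus_carrier_mat[OF mult_carrier_mat[OF transpose_carrier_mat[THEN iffD2, OF W] M]]
        smult_carrier_mat[OF Q] x w] ..
  also have "(x @\<^sub>v w) \<bullet> ((M * V @\<^sub>r 0\<^sub>m n m) *\<^sub>v v) = x \<bullet> (M *\<^sub>v (V *\<^sub>v v))"
    using scalar_prod_append_rows_zero_mult_vec[OF mult_carrier_mat[OF M V] x w v] M V v by simp
  also have "v \<bullet> (append_cols (transpose_mat V * M) (0\<^sub>m m n) *\<^sub>v (x @\<^sub>v w)) = (V *\<^sub>v v) \<bullet> (M *\<^sub>v x)"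
    using scalar_prod_append_cols_zero_mult_vec[OF mult_carrier_mat[OF _ M] x w v, of "transpose_mat V"]
      scalar_prod_transpose_mult_vec[OF V v Mx] M V x by simp
  also have "x \<bullet> (?T11 *\<^sub>v x) = (\<gamma> - 2 * \<alpha>) * (x \<bullet> (M *\<^sub>v x)) - (Ae *\<^sub>v x) \<bullet> (M *\<^sub>v x) - x \<bullet> (M *\<^sub>v (Ae *\<^sub>v x))"
    by (rule lyapunov_quadratic_form[OF M Ae x])
  also have "x \<bullet> (- (M * W) *\<^sub>v w) = - (x \<bullet> (M *\<^sub>v (W *\<^sub>v w)))"
    using M W x w by simp
  also have "w \<bullet> (- (transpose_mat W * M) *\<^sub>v x) = - ((W *\<^sub>v w) \<bullet> (M *\<^sub>v x))"
    using M W x w scalar_prod_transpose_mult_vec[OF W w Mx] by simp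
  also have "w \<bullet> ((\<alpha> \<cdot>\<^sub>m Q) *\<^sub>v w) = \<alpha> * (w \<bullet> (Q *\<^sub>v w))"
    using Q w by (simp add: smult_mat_mult_vec[of _ n n])
  also have "v \<bullet> ((\<alpha> \<cdot>\<^sub>m R) *\<^sub>v v) = \<alpha> * (v \<bullet> (R *\<^sub>v v))"
    using R v by (simp add: smult_mat_mult_vec[of _ m m])
  finally show ?thesis using y_form by simp
qed

lemma append_vec_neq_zero:
  assumes "x \<in> carrier_vec k" "x \<noteq> 0\<^sub>v k"
  shows "x @\<^sub>v y \<noteq> 0\<^sub>v (k + l)"
proof
  assume x_y: "x @\<^sub>v y = 0\<^sub>v (k + l)"
  have "x = 0\<^sub>v k"
  proof (rule eq_vecI)
    fix i assume "i < dim_vec (0\<^sub>v k)"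
    then show "x $ i = 0\<^sub>v k $ i" using arg_cong[OF x_y, of "\<lambda>z. z $ i"] assms(1) by simp
  qed (use assms(1) in simp)
  then show False using assms(2) by simp
qed

lemma LMI_quadratic_form_congruence:
  fixes E Einv P X I0 J Q R :: "real mat" and x w v :: "real vec"
  assumes E: "E \<in> carrier_mat K K" and Einv: "Einv \<in> carrier_mat K K" and inv: "E * Einv = 1\<^sub>m K"
    and P: "P \<in> carrier_mat K K" and X: "X \<in> carrier_mat K K"
    and I0: "I0 \<in> carrier_mat K n" and J: "J \<in> carrier_mat K m"
    and Q: "Q \<in> carrier_mat n n" and R: "R \<in> carrier_mat m m"
    and x: "x \<in> carrier_vec K" and w: "w \<in> carrier_vec n" and v: "v \<in> carrier_vec m"
  defines "\<xi> \<equiv> Einv *\<^sub>v x" and "d \<equiv> X *\<^sub>v x + I0 *\<^sub>v w - J *\<^sub>v v"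
  shows "((\<xi> @\<^sub>v w) @\<^sub>v v) \<bullet> (LMI_mat n m \<gamma> \<alpha> (transpose_mat E * P * E) (Einv * X * E)
      (Einv * I0) (Einv * J) Q R *\<^sub>v ((\<xi> @\<^sub>v w) @\<^sub>v v)) =
    (\<gamma> - 2 * \<alpha>) * (x \<bullet> (P *\<^sub>v x)) - (d \<bullet> (P *\<^sub>v x) + x \<bullet> (P *\<^sub>v d))
      + \<alpha> * (w \<bullet> (Q *\<^sub>v w)) + \<alpha> * (v \<bullet> (R *\<^sub>v v))"
proof -
  have E_Einv: "E *\<^sub>v (Einv *\<^sub>v u) = u" if "u \<in> carrier_vec K" for u
    using that E Einv inv by (simp flip: assoc_mult_mat_vec[of _ K K])
  have \<xi>: "\<xi> \<in> carrier_vec K" and E\<xi>: "E *\<^sub>v \<xi> = x" unfolding \<xi>_def using Einv x E_Einv by auto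
  have d: "d \<in> carrier_vec K" unfolding d_def using X x I0 w J v by auto
  have "(Einv * X * E) *\<^sub>v \<xi> + (Einv * I0) *\<^sub>v w - (Einv * J) *\<^sub>v v = Einv *\<^sub>v d"
  proof -
    have Xx: "X *\<^sub>v x \<in> carrier_vec K" and Iw: "I0 *\<^sub>v w \<in> carrier_vec K" and Jv: "J *\<^sub>v v \<in> carrier_vec K"
      using X x I0 w J v by auto
    show ?thesis
      unfolding d_def using E\<xi> assoc_mult_mat_vec[OF mult_carrier_mat[OF Einv X] E \<xi>]
        assoc_mult_mat_vec[OF Einv X mult_mat_vec_carrier[OF E \<xi>]]
        mult_minus_distrib_mat_vec[OF Einv add_carrier_vec[OF Xx Iw] Jv] mult_add_distrib_mat_vec[OF Einv Xx Iw]
        Einv I0 J w v by simp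
  qed
  then have E_dynamics: "E *\<^sub>v ((Einv * X * E) *\<^sub>v \<xi> + (Einv * I0) *\<^sub>v w - (Einv * J) *\<^sub>v v) = d"
    using E_Einv[OF d] by simp
  have M: "transpose_mat E * P * E \<in> carrier_mat K K" and Ae: "Einv * X * E \<in> carrier_mat K K"
    and W: "Einv * I0 \<in> carrier_mat K n" and V: "Einv * J \<in> carrier_mat K m"
    using E P Einv X I0 J by auto
  have y: "(Einv * X * E) *\<^sub>v \<xi> + (Einv * I0) *\<^sub>v w - (Einv * J) *\<^sub>v v \<in> carrier_vec K"
    using Ae W V \<xi> w v by auto
  show ?thesis
    unfolding LMI_mat_quadratic_form[OF M Ae W V Q R \<xi> w v] scalar_prod_congruence[OF E P \<xi> \<xi>]
      scalar_prod_congruence[OF E P \<xi> y] scalar_prod_congruence[OF E P y \<xi>] E\<xi> E_dynamics ..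
qed

lemma LMI_implies_gamma_bound:
  fixes E Einv P X I0 J Q R :: "real mat" and x w v :: "real vec"
  assumes E: "E \<in> carrier_mat K K" and Einv: "Einv \<in> carrier_mat K K" and inv: "E * Einv = 1\<^sub>m K"
    and P: "P \<in> carrier_mat K K" and X: "X \<in> carrier_mat K K"
    and I0: "I0 \<in> carrier_mat K n" and J: "J \<in> carrier_mat K m"
    and Q: "Q \<in> carrier_mat n n" and R: "R \<in> carrier_mat m m" and \<alpha>: "\<alpha> \<ge> 0"
    and LMI: "pos_def (K + n + m) (LMI_mat n m \<gamma> \<alpha> (transpose_mat E * P * E) (Einv * X * E)
      (Einv * I0) (Einv * J) Q R)"
    and x: "x \<in> carrier_vec K" and w: "w \<in> carrier_vec n" and v: "v \<in> carrier_vec m"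
    and w_bd: "w \<bullet> (Q *\<^sub>v w) \<le> 1" and v_bd: "v \<bullet> (R *\<^sub>v v) \<le> 1" and x_big: "x \<bullet> (P *\<^sub>v x) \<ge> 1"
  defines "d \<equiv> X *\<^sub>v x + I0 *\<^sub>v w - J *\<^sub>v v"
  shows "d \<bullet> (P *\<^sub>v x) + x \<bullet> (P *\<^sub>v d) < \<gamma> * (x \<bullet> (P *\<^sub>v x))"
proof -
  let ?\<xi> = "Einv *\<^sub>v x"
  have \<xi>: "?\<xi> \<in> carrier_vec K" using Einv x by simp
  have "x \<noteq> 0\<^sub>v K"
  proof
    assume "x = 0\<^sub>v K"
    then have "x \<bullet> (P *\<^sub>v x) = 0" using P by simp
    then show False using x_big by simp
  qed
  moreover have "E *\<^sub>v ?\<xi> = x"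
    using E Einv inv x by (simp flip: assoc_mult_mat_vec[of _ K K])
  moreover have "E *\<^sub>v 0\<^sub>v K = 0\<^sub>v K" using E by (intro eq_vecI) auto
  ultimately have "?\<xi> \<noteq> 0\<^sub>v K" by metis
  then have "(?\<xi> @\<^sub>v w) @\<^sub>v v \<noteq> 0\<^sub>v (K + n + m)"
    using \<xi> w by (intro append_vec_neq_zero append_vec_neq_zero) auto
  then have "0 < (\<gamma> - 2 * \<alpha>) * (x \<bullet> (P *\<^sub>v x)) - (d \<bullet> (P *\<^sub>v x) + x \<bullet> (P *\<^sub>v d))
      + \<alpha> * (w \<bullet> (Q *\<^sub>v w)) + \<alpha> * (v \<bullet> (R *\<^sub>v v))"
    using LMI \<xi> w v unfolding pos_def_def d_def
    by (auto simp flip: LMI_quadratic_form_congruence[OF E Einv inv P X I0 J Q R x w v])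
  moreover have "\<alpha> * (w \<bullet> (Q *\<^sub>v w)) \<le> \<alpha>" "\<alpha> * (v \<bullet> (R *\<^sub>v v)) \<le> \<alpha>" "\<alpha> \<le> \<alpha> * (x \<bullet> (P *\<^sub>v x))"
    using \<alpha> w_bd v_bd x_big by (simp_all add: mult_left_le mult_le_cancel_left1)
  ultimately show ?thesis by (simp add: algebra_simps)
qed

theorem lemma5:
  fixes N n :: nat and p md :: "nat \<Rightarrow> nat"
    and E :: "nat \<Rightarrow> nat \<Rightarrow> bool"
    and A P Q R S \<Lambda> :: "real mat"
    and Bs Ks Cs Ls :: "real mat list"
    and \<eta> \<gamma> :: real
    and e w v :: "real \<Rightarrow> real vec" and t :: real
  defines "m \<equiv> (\<Sum>i<N. md i)"
      and "Lap \<equiv> laplacian N E"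
  assumes N2: "N \<ge> 2"
    and graph: "undirected_graph N E" "connected_graph N E"
    and eta: "\<eta> \<ge> 0"
    and A_dim: "A \<in> carrier_mat n n"
    and lens: "length Bs = N" "length Ks = N" "length Cs = N" "length Ls = N"
    and B_dim: "\<forall>i<N. Bs ! i \<in> carrier_mat n (p i)"
    and K_dim: "\<forall>i<N. Ks ! i \<in> carrier_mat (p i) n"
    and C_dim: "\<forall>i<N. Cs ! i \<in> carrier_mat (md i) n"
    and L_dim: "\<forall>i<N. Ls ! i \<in> carrier_mat n (md i)"
    and P_pd: "pos_def (N * n) P" and Q_pd: "pos_def n Q" and R_pd: "pos_def m R"
    and S_dim: "S \<in> carrier_mat N (N - 1)"
    and S_orth1: "mat 1 N (\<lambda>_. 1) * S = 0\<^sub>m 1 (N - 1)"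
    and S_orthn: "transpose_mat S * S = 1\<^sub>m (N - 1)"
    and S_diag: "transpose_mat S * Lap * S = \<Lambda>"
    and Lambda: "\<Lambda> \<in> carrier_mat (N - 1) (N - 1)" "diagonal_mat \<Lambda>"
       "\<forall>i<N - 1. \<Lambda> $$ (i, i) > 0 \<and> eigenvalue Lap (\<Lambda> $$ (i, i))"
    and LMI: "\<exists>\<alpha>\<^sub>3 \<ge> 0. pos_def (N * n + n + m)
       (LMI_mat n m \<gamma> \<alpha>\<^sub>3 (transpose_mat (Ebar N n S) * P * Ebar N n S)
          (Aebar N n A Bs Ks Cs Ls \<eta> S \<Lambda>) (Wbar N n S) (Vbar N n S Ls) Q R)"
    and e_dim: "\<forall>s. e s \<in> carrier_vec (N * n)"
    and w_dim: "w t \<in> carrier_vec n" and v_dim: "v t \<in> carrier_vec m"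
    and ode: "\<forall>i < N * n. ((\<lambda>s. e s $ i) has_real_derivative
       (((Fbar N n A Bs Ks Cs Ls - \<eta> \<cdot>\<^sub>m kron Lap (1\<^sub>m n)) *\<^sub>v e t
         + Istack N n *\<^sub>v w t - Jbar N Ls *\<^sub>v v t) $ i)) (at t)"
    and w_bd: "w t \<bullet> (Q *\<^sub>v w t) \<le> 1"
    and v_bd: "v t \<bullet> (R *\<^sub>v v t) \<le> 1"
    and e_big: "e t \<bullet> (P *\<^sub>v e t) \<ge> 1"
  shows "\<exists>D. ((\<lambda>s. e s \<bullet> (P *\<^sub>v e s)) has_real_derivative D) (at t)
            \<and> D < \<gamma> * (e t \<bullet> (P *\<^sub>v e t))"
proof -
  interpret agent_system N n p md A Bs Ks Cs Ls
    using A_dim lens B_dim K_dim C_dim L_dim by unfold_locales auto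
  have N1: "N \<ge> 1" using N2 by simp
  have P: "P \<in> carrier_mat (N * n) (N * n)" and Q: "Q \<in> carrier_mat n n" and R: "R \<in> carrier_mat m m"
    using P_pd Q_pd R_pd by (auto simp: pos_def_def)
  have J: "Jbar N Ls \<in> carrier_mat (N * n) m" unfolding m_def by (rule Jbar_carrier)
  obtain \<alpha> where \<alpha>: "\<alpha> \<ge> 0" and pd: "pos_def (N * n + n + m)
      (LMI_mat n m \<gamma> \<alpha> (transpose_mat (Ebar N n S) * P * Ebar N n S)
        (Ebar_inv N n S * error_dynamics_mat \<eta> E * Ebar N n S)
        (Ebar_inv N n S * Istack N n) (Ebar_inv N n S * Jbar N Ls) Q R)"
    using LMI by (auto simp: Aebar_eq_similarity[OF N1 graph(1) S_dim S_diag[unfolded Lap_def]]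
        Wbar_eq_Ebar_inv_mult_Istack[OF N1 S_dim] Vbar_eq_Ebar_inv_mult_Jbar[OF N1 S_dim])
  define d where "d = error_dynamics_mat \<eta> E *\<^sub>v e t + Istack N n *\<^sub>v w t - Jbar N Ls *\<^sub>v v t"
  have d: "d \<in> carrier_vec (N * n)"
    unfolding d_def using e_dim w_dim v_dim
    by (intro minus_carrier_vec add_carrier_vec mult_mat_vec_carrier[OF error_dynamics_carrier]
        mult_mat_vec_carrier[OF carrier_Istack(1)] mult_mat_vec_carrier[OF J]) auto
  have "((\<lambda>s. e s \<bullet> (P *\<^sub>v e s)) has_real_derivative d \<bullet> (P *\<^sub>v e t) + e t \<bullet> (P *\<^sub>v d)) (at t)"
    using ode unfolding d_def Lap_def by (intro DERIV_quadratic_form[OF e_dim P d[unfolded d_def]]) auto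
  moreover have "d \<bullet> (P *\<^sub>v e t) + e t \<bullet> (P *\<^sub>v d) < \<gamma> * (e t \<bullet> (P *\<^sub>v e t))"
    unfolding d_def using e_dim
    by (intro LMI_implies_gamma_bound[OF carrier_Ebar[OF N1 S_dim] carrier_Ebar_inv[OF N1 S_dim]
        Ebar_mult_Ebar_inv[OF N1 S_dim S_orth1 S_orthn] P error_dynamics_carrier carrier_Istack(1) J Q R
        \<alpha> pd _ w_dim v_dim w_bd v_bd e_big]) auto
  ultimately show ?thesis by blast
qed

end
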